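(* Let $\alpha$ be a unit-speed curve in $\mathbb{R}^3$ with nonvanishing curvature, let $\alpha_T$ be its tangent indicatrix with arc length $s_T$ and Frenet apparatus $\{T_T,N_T,B_T,\kappa_T,\tau_T\}$, and let $\beta$ be an evolute-direction curve of $\alpha_T$ (an $X$-direction curve of $\alpha_T$ with $N_\beta=T_T$). Then there is an antiderivative $\varphi=\int\tau_T\,ds_T$ of $\tau_T$ with respect to $s_T$ such that $$\kappa_\beta=-\kappa_T\sin\varphi,\qquad \tau_\beta=\kappa_T\cos\varphi.$$ Moreover, $$\kappa_T=\sqrt{\kappa_\beta^2+\tau_\beta^2},\qquad \tau_T=\frac{\kappa_\beta^2}{\kappa_\beta^2+\tau_\beta^2}\,\frac{d}{ds_T}\Big(\frac{\tau_\beta}{\kappa_\beta}\Big).$$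
   Context: Let $\alpha:I\subset\mathbb{R}\to\mathbb{R}^3$ be a unit-speed curve with arc length $s$, curvature $\kappa>0$, torsion $\tau$ and Frenet frame $\{T,N,B\}$. The tangent indicatrix of $\alpha$ is the curve $\alpha_T=T$ on the unit sphere. Its arc length is $s_T=\int\kappa\,ds$. Its Frenet apparatus is $\{T_T,N_T,B_T,\kappa_T,\tau_T\}$, with $\frac{dT_T}{ds_T}=\kappa_TN_T$, $\frac{dN_T}{ds_T}=-\kappa_TT_T+\tau_TB_T$ and $\frac{dB_T}{ds_T}=-\tau_TN_T$. Let $x,y,z$ be real functions of $s_T$ with $x^2+y^2+z^2=1$, and set $X=xT_T+yN_T+zB_T$. An integral curve $\beta$ of $X$, meaning $d\beta/ds_T=X$, is an $X$-direction curve of $\alpha_T$. It has unit speed with arc length $s_T$. It is regarded as a Frenet curve with frame $\{T_\beta=X,N_\beta,B_\beta\}$, curvature $\kappa_\beta>0$ and torsion $\tau_\beta$, with derivatives taken with respect to $s_T$. $\beta$ is an evolute-direction curve of $\alpha_T$ if $N_\beta=T_T$. *)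

theory Defs
  imports "HOL-Analysis.Analysis" "HOL-Analysis.Cross3"
begin

definition frenet_curve_on ::
  "real set \<Rightarrow> (real \<Rightarrow> real^3) \<Rightarrow> (real \<Rightarrow> real^3) \<Rightarrow> (real \<Rightarrow> real^3)
     \<Rightarrow> (real \<Rightarrow> real^3) \<Rightarrow> (real \<Rightarrow> real) \<Rightarrow> (real \<Rightarrow> real) \<Rightarrow> bool" where
  "frenet_curve_on S c t n b k tau \<longleftrightarrow>
    (\<forall>s\<in>S.
       (c has_vector_derivative t s) (at s) \<and>
       (t has_vector_derivative (k s *\<^sub>R n s)) (at s) \<and>
       (n has_vector_derivative (- (k s *\<^sub>R t s) + tau s *\<^sub>R b s)) (at s) \<and>
       (b has_vector_derivative (- (tau s *\<^sub>R n s))) (at s) \<and>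
       norm (t s) = 1 \<and> norm (n s) = 1 \<and> t s \<bullet> n s = 0 \<and>
       b s = cross3 (t s) (n s) \<and> k s > 0)"

end

theory Submission
  imports Defs
begin

text \<open>Since \<open>N\<^sub>\<beta> = T\<^sub>T\<close>, the direction \<open>X\<close> is orthogonal to \<open>T\<^sub>T\<close>, so
\<open>X = y N\<^sub>T + z B\<^sub>T\<close> with \<open>y\<^sup>2 + z\<^sup>2 = 1\<close>, and the Frenet equations of \<open>\<alpha>\<^sub>T\<close> give
\<open>y' = \<tau>\<^sub>T z\<close>, \<open>z' = -\<tau>\<^sub>T y\<close>. Comparing \<open>N\<^sub>\<beta>' = T\<^sub>T' = \<kappa>\<^sub>T N\<^sub>T\<close> with the Frenet
equation \<open>N\<^sub>\<beta>' = -\<kappa>\<^sub>\<beta> X + \<tau>\<^sub>\<beta> B\<^sub>\<beta>\<close> gives \<open>\<kappa>\<^sub>\<beta> = -\<kappa>\<^sub>T y\<close> and \<open>\<tau>\<^sub>\<beta> = \<kappa>\<^sub>T z\<close>.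
On the interval \<open>s\<^sub>T(I)\<close> the unit vector \<open>(z, y)\<close> has a continuous angle \<open>\<phi>\<close>, and the
rotation equations force \<open>\<phi>' = \<tau>\<^sub>T\<close>. The formulas for \<open>\<kappa>\<^sub>T\<close> and \<open>\<tau>\<^sub>T\<close> then follow
from \<open>\<tau>\<^sub>\<beta>/\<kappa>\<^sub>\<beta> = -z/y\<close>, whose derivative is \<open>\<tau>\<^sub>T/y\<^sup>2\<close>.\<close>

lemma has_real_derivative_inner:
  fixes f g :: "real \<Rightarrow> 'a::real_inner"
  assumes "(f has_vector_derivative f') (at u)" "(g has_vector_derivative g') (at u)"
  shows "((\<lambda>v. f v \<bullet> g v) has_real_derivative f' \<bullet> g u + f u \<bullet> g') (at u)"
proof -
  have "((\<lambda>v. f v \<bullet> g v) has_derivative (\<lambda>h. f u \<bullet> (h *\<^sub>R g') + (h *\<^sub>R f') \<bullet> g u)) (at u)"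
    using has_derivative_inner[OF assms[unfolded has_vector_derivative_def]] .
  then show ?thesis
    unfolding has_field_derivative_def by (rule has_derivative_eq_rhs) (auto simp: algebra_simps)
qed

lemma open_interval_image_of_pos_deriv:
  fixes f :: "real \<Rightarrow> real"
  assumes "open I" "is_interval I"
    and deriv: "\<And>s. s \<in> I \<Longrightarrow> (f has_real_derivative f' s) (at s)"
    and pos: "\<And>s. s \<in> I \<Longrightarrow> f' s > 0"
  shows "open (f ` I)" "is_interval (f ` I)"
proof -
  have cont: "continuous_on I f"
    using deriv by (meson DERIV_isCont continuous_at_imp_continuous_on)
  have "f a < f b" if "a \<in> I" "b \<in> I" "a < b" for a b
  proof (rule DERIV_pos_imp_increasing[OF \<open>a < b\<close>])
    fix t assume "a \<le> t" "t \<le> b"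
    then have "t \<in> I" using \<open>is_interval I\<close> that unfolding is_interval_1 by blast
    then show "\<exists>y. (f has_real_derivative y) (at t) \<and> y > 0" using deriv pos by blast
  qed
  then have "inj_on f I"
    by (metis inj_on_def linorder_neqE_linordered_idom order_less_irrefl)
  then show "open (f ` I)"
    using invariance_of_domain[OF cont \<open>open I\<close>] by blast
  show "is_interval (f ` I)"
    using connected_continuous_image[OF cont] \<open>is_interval I\<close> is_interval_connected_1 by blast
qed

lemma continuous_angle_of_unit_pair:
  fixes S :: "'a::real_normed_vector set" and c s :: "'a \<Rightarrow> real"
  assumes "Borsukian S" "continuous_on S c" "continuous_on S s"
    and unit: "\<And>v. v \<in> S \<Longrightarrow> (c v)\<^sup>2 + (s v)\<^sup>2 = 1"
  obtains \<phi> where "continuous_on S \<phi>" "\<And>v. v \<in> S \<Longrightarrow> c v = cos (\<phi> v) \<and> s v = sin (\<phi> v)"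
proof -
  have "continuous_on S (\<lambda>v. Complex (c v) (s v))"
    using assms(2,3) unfolding Complex_eq by (intro continuous_intros)
  moreover have "(\<lambda>v. Complex (c v) (s v)) \<in> S \<rightarrow> sphere 0 1"
    using unit by (simp add: cmod_def)
  ultimately obtain \<phi> where cont: "continuous_on S (complex_of_real \<circ> \<phi>)"
    and \<phi>: "\<forall>v\<in>S. Complex (c v) (s v) = exp (\<i> * of_real (\<phi> v))"
    using \<open>Borsukian S\<close> Borsukian_continuous_logarithm_circle_real by blast
  show thesis
  proof
    show "continuous_on S \<phi>"
      using continuous_on_Re[OF cont] by (simp add: o_def)
    show "c v = cos (\<phi> v) \<and> s v = sin (\<phi> v)" if "v \<in> S" for v
      using \<phi> that by (simp add: exp_Euler complex_eq_iff cos_of_real sin_of_real)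
  qed
qed

lemma angle_has_real_derivative:
  fixes \<phi> c s :: "real \<Rightarrow> real"
  assumes "isCont \<phi> u"
    and polar: "eventually (\<lambda>v. c v = cos (\<phi> v) \<and> s v = sin (\<phi> v)) (nhds u)"
    and dc: "(c has_real_derivative - (w * s u)) (at u)"
    and ds: "(s has_real_derivative w * c u) (at u)"
  shows "(\<phi> has_real_derivative w) (at u)"
proof -
  \<comment> \<open>\<open>h v = sin (\<phi> v - \<phi> u)\<close>, so near \<open>u\<close> the angle is \<open>\<phi> u + arcsin (h v)\<close>\<close>
  define h where "h v = s v * c u - c v * s u" for v
  have polar_u: "c u = cos (\<phi> u) \<and> s u = sin (\<phi> u)"
    using eventually_nhds_x_imp_x[OF polar] .
  have "(h has_real_derivative w * ((c u)\<^sup>2 + (s u)\<^sup>2)) (at u)"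
    unfolding h_def by (auto intro!: derivative_eq_intros ds dc simp: algebra_simps power2_eq_square)
  then have "(h has_real_derivative w) (at u)"
    using polar_u by simp
  moreover have "h u = 0"
    by (simp add: h_def)
  ultimately have lift_deriv: "((\<lambda>v. \<phi> u + arcsin (h v)) has_real_derivative w) (at u)"
    by (auto intro!: derivative_eq_intros)
  have "eventually (\<lambda>v. \<bar>\<phi> v - \<phi> u\<bar> < pi/2) (nhds u)"
    using \<open>isCont \<phi> u\<close> tendsto_iff[THEN iffD1, rule_format, of \<phi> "\<phi> u" "nhds u" "pi/2"]
    by (simp add: isCont_def tendsto_at_iff_tendsto_nhds dist_real_def)
  then have lift_eq: "eventually (\<lambda>v. \<phi> u + arcsin (h v) = \<phi> v) (nhds u)"
  proof (rule eventually_mono[OF eventually_conj[OF polar]])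
    fix v
    assume v: "(c v = cos (\<phi> v) \<and> s v = sin (\<phi> v)) \<and> \<bar>\<phi> v - \<phi> u\<bar> < pi/2"
    then have "- (pi/2) \<le> \<phi> v - \<phi> u" "\<phi> v - \<phi> u \<le> pi/2"
      unfolding abs_less_iff by linarith+
    then have "arcsin (sin (\<phi> v - \<phi> u)) = \<phi> v - \<phi> u"
      by (rule arcsin_sin)
    moreover have "h v = sin (\<phi> v - \<phi> u)"
      using v polar_u by (simp add: h_def sin_diff)
    ultimately show "\<phi> u + arcsin (h v) = \<phi> v"
      by simp
  qed
  show ?thesis
    using DERIV_cong_ev[OF refl lift_eq refl] lift_deriv by (rule iffD1)
qed

lemma inner_cross3_shift: "cross3 a b \<bullet> c = a \<bullet> cross3 b c"
  for a b c :: "real^3"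
  by (simp add: cross3_simps)

lemma frenet_curve_on_orthonormal:
  assumes "frenet_curve_on S c t n b k tau" "s \<in> S"
  shows "t s \<bullet> t s = 1" "n s \<bullet> n s = 1" "b s \<bullet> b s = 1"
    and "t s \<bullet> n s = 0" "t s \<bullet> b s = 0" "n s \<bullet> b s = 0"
    and "n s \<bullet> t s = 0" "b s \<bullet> t s = 0" "b s \<bullet> n s = 0"
proof -
  have frame: "norm (t s) = 1" "norm (n s) = 1" "t s \<bullet> n s = 0" "b s = cross3 (t s) (n s)"
    using assms unfolding frenet_curve_on_def by auto
  then show "t s \<bullet> t s = 1" "n s \<bullet> n s = 1" "t s \<bullet> n s = 0"
    by (simp_all add: dot_square_norm)
  show "t s \<bullet> b s = 0" "n s \<bullet> b s = 0" "b s \<bullet> t s = 0" "b s \<bullet> n s = 0"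
    using frame(4) dot_cross_self by (simp_all add: inner_commute)
  show "n s \<bullet> t s = 0"
    using frame(3) by (simp add: inner_commute)
  have "(norm (b s))\<^sup>2 = 1"
    using norm_cross_dot[of "t s" "n s"] frame by simp
  then show "b s \<bullet> b s = 1"
    by (simp add: dot_square_norm)
qed

lemma inner_orthonormal_combination:
  fixes t b :: "'a::real_inner"
  assumes "t \<bullet> t = 1" "b \<bullet> b = 1" "t \<bullet> b = 0"
  shows "t \<bullet> (p *\<^sub>R t + q *\<^sub>R b) = p" "b \<bullet> (p *\<^sub>R t + q *\<^sub>R b) = q"
  using assms by (simp_all add: inner_add_right inner_commute)

locale evolute_direction_curve =
  fixes J :: "real set"
    and \<alpha>T TT NT BT :: "real \<Rightarrow> real^3" and \<kappa>T \<tau>T :: "real \<Rightarrow> real"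
    and x y z :: "real \<Rightarrow> real"
    and \<beta> N\<beta> B\<beta> :: "real \<Rightarrow> real^3" and \<kappa>\<beta> \<tau>\<beta> :: "real \<Rightarrow> real"
  assumes open_J: "open J"
    and frenet_T: "frenet_curve_on J \<alpha>T TT NT BT \<kappa>T \<tau>T"
    and frenet_\<beta>: "frenet_curve_on J \<beta> (\<lambda>u. x u *\<^sub>R TT u + y u *\<^sub>R NT u + z u *\<^sub>R BT u)
                    N\<beta> B\<beta> \<kappa>\<beta> \<tau>\<beta>"
    and evolute: "\<And>u. u \<in> J \<Longrightarrow> N\<beta> u = TT u"
begin

abbreviation X :: "real \<Rightarrow> real^3" where
  "X \<equiv> \<lambda>u. x u *\<^sub>R TT u + y u *\<^sub>R NT u + z u *\<^sub>R BT u"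

lemmas frame_T = frenet_curve_on_orthonormal[OF frenet_T]
lemmas frame_\<beta> = frenet_curve_on_orthonormal[OF frenet_\<beta>]

lemma curvatures_pos:
  assumes "u \<in> J"
  shows "\<kappa>T u > 0" "\<kappa>\<beta> u > 0"
  using frenet_T frenet_\<beta> assms unfolding frenet_curve_on_def by auto

lemma X_has_vector_derivative:
  assumes "u \<in> J"
  shows "(X has_vector_derivative \<kappa>\<beta> u *\<^sub>R TT u) (at u)"
  using frenet_\<beta> assms evolute[OF assms] unfolding frenet_curve_on_def by auto

lemma frenet_equations_T:
  assumes "u \<in> J"
  shows "(TT has_vector_derivative \<kappa>T u *\<^sub>R NT u) (at u)"
    and "(NT has_vector_derivative - (\<kappa>T u *\<^sub>R TT u) + \<tau>T u *\<^sub>R BT u) (at u)"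
    and "(BT has_vector_derivative - (\<tau>T u *\<^sub>R NT u)) (at u)"
  using frenet_T assms unfolding frenet_curve_on_def by auto

lemma X_coordinates:
  assumes "u \<in> J"
  shows "X u \<bullet> TT u = x u" "X u \<bullet> NT u = y u" "X u \<bullet> BT u = z u"
  using frame_T[OF assms] by (simp_all add: inner_add_left)

lemma x_eq_0:
  assumes "u \<in> J"
  shows "x u = 0"
  using frame_\<beta>(4)[OF assms] X_coordinates(1)[OF assms] evolute[OF assms] by simp

lemma y_z_unit:
  assumes "u \<in> J"
  shows "(y u)\<^sup>2 + (z u)\<^sup>2 = 1"
proof -
  have "X u \<bullet> X u = x u * (X u \<bullet> TT u) + y u * (X u \<bullet> NT u) + z u * (X u \<bullet> BT u)"
    by (simp add: inner_add_right)
  then show ?thesis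
    using frame_\<beta>(1)[OF assms] X_coordinates[OF assms] x_eq_0[OF assms]
    by (simp add: power2_eq_square)
qed

lemma y_has_real_derivative:
  assumes "u \<in> J"
  shows "(y has_real_derivative \<tau>T u * z u) (at u)"
proof -
  have "((\<lambda>v. X v \<bullet> NT v) has_real_derivative
      (\<kappa>\<beta> u *\<^sub>R TT u) \<bullet> NT u + X u \<bullet> (- (\<kappa>T u *\<^sub>R TT u) + \<tau>T u *\<^sub>R BT u)) (at u)"
    using X_has_vector_derivative[OF assms] frenet_equations_T(2)[OF assms]
    by (rule has_real_derivative_inner)
  moreover have "(\<kappa>\<beta> u *\<^sub>R TT u) \<bullet> NT u + X u \<bullet> (- (\<kappa>T u *\<^sub>R TT u) + \<tau>T u *\<^sub>R BT u) = \<tau>T u * z u"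
    using frame_T[OF assms] x_eq_0[OF assms]
    by (simp add: inner_add_left inner_add_right inner_diff_right)
  ultimately show ?thesis
    using has_field_derivative_transform_within_open[OF _ open_J assms] X_coordinates(2) by auto
qed

lemma z_has_real_derivative:
  assumes "u \<in> J"
  shows "(z has_real_derivative - (\<tau>T u * y u)) (at u)"
proof -
  have "((\<lambda>v. X v \<bullet> BT v) has_real_derivative
      (\<kappa>\<beta> u *\<^sub>R TT u) \<bullet> BT u + X u \<bullet> (- (\<tau>T u *\<^sub>R NT u))) (at u)"
    using X_has_vector_derivative[OF assms] frenet_equations_T(3)[OF assms]
    by (rule has_real_derivative_inner)
  moreover have "(\<kappa>\<beta> u *\<^sub>R TT u) \<bullet> BT u + X u \<bullet> (- (\<tau>T u *\<^sub>R NT u)) = - (\<tau>T u * y u)"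
    using frame_T[OF assms] by (simp add: inner_add_left inner_add_right)
  ultimately show ?thesis
    using has_field_derivative_transform_within_open[OF _ open_J assms] X_coordinates(3) by auto
qed

lemma curvature_torsion_\<beta>:
  assumes "u \<in> J"
  shows "\<kappa>\<beta> u = - \<kappa>T u * y u" "\<tau>\<beta> u = \<kappa>T u * z u"
proof -
  have "(TT has_vector_derivative - (\<kappa>\<beta> u *\<^sub>R X u) + \<tau>\<beta> u *\<^sub>R B\<beta> u) (at u)"
    using frenet_\<beta> has_vector_derivative_transform_within_open[OF _ open_J assms, of N\<beta>]
      evolute assms unfolding frenet_curve_on_def by auto
  then have D: "\<kappa>T u *\<^sub>R NT u = (- \<kappa>\<beta> u) *\<^sub>R X u + \<tau>\<beta> u *\<^sub>R B\<beta> u"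
    using frenet_equations_T(1)[OF assms] vector_derivative_unique_at by fastforce
  have "B\<beta> u = cross3 (X u) (TT u)"
    using frenet_\<beta> assms evolute[OF assms] unfolding frenet_curve_on_def by auto
  then have "B\<beta> u \<bullet> NT u = z u"
    using inner_cross3_shift[of "X u" "TT u" "NT u"] frenet_T assms X_coordinates(3)[OF assms]
    unfolding frenet_curve_on_def by auto
  then show "\<tau>\<beta> u = \<kappa>T u * z u"
    using inner_orthonormal_combination(2)[OF frame_\<beta>(1,3,5)[OF assms], of "- \<kappa>\<beta> u" "\<tau>\<beta> u"]
    unfolding D[symmetric] by simp
  show "\<kappa>\<beta> u = - \<kappa>T u * y u"
    using inner_orthonormal_combination(1)[OF frame_\<beta>(1,3,5)[OF assms], of "- \<kappa>\<beta> u" "\<tau>\<beta> u"]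
      X_coordinates(2)[OF assms] unfolding D[symmetric] by simp
qed

lemma angle_of_direction:
  assumes "is_interval J"
  obtains \<phi> where "\<And>u. u \<in> J \<Longrightarrow> (\<phi> has_real_derivative \<tau>T u) (at u)"
    and "\<And>u. u \<in> J \<Longrightarrow> z u = cos (\<phi> u) \<and> y u = sin (\<phi> u)"
proof -
  have "continuous_on J z" "continuous_on J y"
    using y_has_real_derivative z_has_real_derivative
    by (meson DERIV_isCont continuous_at_imp_continuous_on)+
  moreover have "Borsukian J"
    using assms contractible_imp_Borsukian is_interval_contractible_1 by blast
  ultimately obtain \<phi> where cont: "continuous_on J \<phi>"
    and polar: "\<And>u. u \<in> J \<Longrightarrow> z u = cos (\<phi> u) \<and> y u = sin (\<phi> u)"
    using continuous_angle_of_unit_pair[of J z y] y_z_unit by (metis add.commute)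
  have "(\<phi> has_real_derivative \<tau>T u) (at u)" if "u \<in> J" for u
  proof (rule angle_has_real_derivative)
    show "isCont \<phi> u"
      using cont open_J that continuous_on_eq_continuous_at by blast
    show "\<forall>\<^sub>F v in nhds u. z v = cos (\<phi> v) \<and> y v = sin (\<phi> v)"
      using eventually_nhds_in_open[OF open_J that] by (rule eventually_mono) (rule polar)
  qed (use that y_has_real_derivative z_has_real_derivative in auto)
  with polar that show thesis by blast
qed

lemma y_ne_0:
  assumes "u \<in> J"
  shows "y u \<noteq> 0"
  using curvatures_pos(2)[OF assms] curvature_torsion_\<beta>(1)[OF assms] by auto

lemma torsion_ratio_has_real_derivative:
  assumes "u \<in> J"
  shows "((\<lambda>v. \<tau>\<beta> v / \<kappa>\<beta> v) has_real_derivative \<tau>T u / (y u)\<^sup>2) (at u)"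
proof -
  have "((\<lambda>v. - (z v / y v)) has_real_derivative
      (- (((- (\<tau>T u * y u)) * y u - z u * (\<tau>T u * z u)) / (y u * y u)))) (at u)"
    by (intro derivative_intros y_has_real_derivative z_has_real_derivative y_ne_0 assms)
  moreover have "- (((- (\<tau>T u * y u)) * y u - z u * (\<tau>T u * z u)) / (y u * y u))
      = \<tau>T u * ((y u)\<^sup>2 + (z u)\<^sup>2) / (y u)\<^sup>2"
    by (simp add: power2_eq_square algebra_simps add_divide_distrib diff_divide_distrib)
  ultimately have "((\<lambda>v. - (z v / y v)) has_real_derivative \<tau>T u / (y u)\<^sup>2) (at u)"
    using y_z_unit[OF assms] by simp
  moreover have "- (z v / y v) = \<tau>\<beta> v / \<kappa>\<beta> v" if "v \<in> J" for v
    using curvatures_pos(1)[OF that] curvature_torsion_\<beta>[OF that] by simp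
  ultimately show ?thesis
    by (rule has_field_derivative_transform_within_open[OF _ open_J assms])
qed

lemma curvature_torsion_T:
  assumes "u \<in> J"
  shows "\<kappa>T u = sqrt ((\<kappa>\<beta> u)\<^sup>2 + (\<tau>\<beta> u)\<^sup>2)"
    and "\<tau>T u = (\<kappa>\<beta> u)\<^sup>2 / ((\<kappa>\<beta> u)\<^sup>2 + (\<tau>\<beta> u)\<^sup>2) * deriv (\<lambda>v. \<tau>\<beta> v / \<kappa>\<beta> v) u"
proof -
  have "(\<kappa>\<beta> u)\<^sup>2 + (\<tau>\<beta> u)\<^sup>2 = (\<kappa>T u)\<^sup>2 * ((y u)\<^sup>2 + (z u)\<^sup>2)"
    unfolding curvature_torsion_\<beta>[OF assms] by (simp add: power_mult_distrib algebra_simps)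
  then have sum_sq: "(\<kappa>\<beta> u)\<^sup>2 + (\<tau>\<beta> u)\<^sup>2 = (\<kappa>T u)\<^sup>2"
    using y_z_unit[OF assms] by simp
  then show "\<kappa>T u = sqrt ((\<kappa>\<beta> u)\<^sup>2 + (\<tau>\<beta> u)\<^sup>2)"
    using curvatures_pos(1)[OF assms] by simp
  show "\<tau>T u = (\<kappa>\<beta> u)\<^sup>2 / ((\<kappa>\<beta> u)\<^sup>2 + (\<tau>\<beta> u)\<^sup>2) * deriv (\<lambda>v. \<tau>\<beta> v / \<kappa>\<beta> v) u"
    unfolding sum_sq DERIV_imp_deriv[OF torsion_ratio_has_real_derivative[OF assms]]
    unfolding curvature_torsion_\<beta>(1)[OF assms]
    using curvatures_pos(1)[OF assms] y_ne_0[OF assms] by (simp add: power_mult_distrib)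
qed

end

theorem theorem4p3:
  fixes I :: "real set"
    and \<alpha> T N B :: "real \<Rightarrow> real^3" and \<kappa> \<tau> :: "real \<Rightarrow> real"
    and sT :: "real \<Rightarrow> real"
    and \<alpha>T TT NT BT :: "real \<Rightarrow> real^3" and \<kappa>T \<tau>T :: "real \<Rightarrow> real"
    and x y z :: "real \<Rightarrow> real"
    and \<beta> N\<beta> B\<beta> :: "real \<Rightarrow> real^3" and \<kappa>\<beta> \<tau>\<beta> :: "real \<Rightarrow> real"
  assumes I: "open I" "is_interval I" "I \<noteq> {}"
    and alpha: "frenet_curve_on I \<alpha> T N B \<kappa> \<tau>"
    and arclen: "\<forall>s\<in>I. (sT has_real_derivative \<kappa> s) (at s)"
    and indicatrix: "\<forall>s\<in>I. \<alpha>T (sT s) = T s"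
    and alphaT: "frenet_curve_on (sT ` I) \<alpha>T TT NT BT \<kappa>T \<tau>T"
    and unit: "\<forall>u\<in>sT ` I. (x u)\<^sup>2 + (y u)\<^sup>2 + (z u)\<^sup>2 = 1"
    and beta: "frenet_curve_on (sT ` I) \<beta>
                 (\<lambda>u. x u *\<^sub>R TT u + y u *\<^sub>R NT u + z u *\<^sub>R BT u) N\<beta> B\<beta> \<kappa>\<beta> \<tau>\<beta>"
    and evolute: "\<forall>u\<in>sT ` I. N\<beta> u = TT u"
  shows "(\<exists>\<phi>. (\<forall>u\<in>sT ` I. (\<phi> has_real_derivative \<tau>T u) (at u)) \<and>
              (\<forall>u\<in>sT ` I. \<kappa>\<beta> u = - \<kappa>T u * sin (\<phi> u) \<and> \<tau>\<beta> u = \<kappa>T u * cos (\<phi> u)))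
         \<and> (\<forall>u\<in>sT ` I.
              \<kappa>T u = sqrt ((\<kappa>\<beta> u)\<^sup>2 + (\<tau>\<beta> u)\<^sup>2) \<and>
              (\<lambda>v. \<tau>\<beta> v / \<kappa>\<beta> v) differentiable (at u) \<and>
              \<tau>T u = (\<kappa>\<beta> u)\<^sup>2 / ((\<kappa>\<beta> u)\<^sup>2 + (\<tau>\<beta> u)\<^sup>2) * deriv (\<lambda>v. \<tau>\<beta> v / \<kappa>\<beta> v) u)"
proof -
  have "\<kappa> s > 0" if "s \<in> I" for s
    using alpha that unfolding frenet_curve_on_def by blast
  then have J: "open (sT ` I)" "is_interval (sT ` I)"
    using open_interval_image_of_pos_deriv[OF I(1,2)] arclen by blast+
  interpret evolute_direction_curve "sT ` I" \<alpha>T TT NT BT \<kappa>T \<tau>T x y z \<beta> N\<beta> B\<beta> \<kappa>\<beta> \<tau>\<beta>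
    using J(1) alphaT beta evolute by unfold_locales auto
  obtain \<phi> where "\<And>u. u \<in> sT ` I \<Longrightarrow> (\<phi> has_real_derivative \<tau>T u) (at u)"
    and "\<And>u. u \<in> sT ` I \<Longrightarrow> z u = cos (\<phi> u) \<and> y u = sin (\<phi> u)"
    using angle_of_direction[OF J(2)] by blast
  then have "\<exists>\<phi>. (\<forall>u\<in>sT ` I. (\<phi> has_real_derivative \<tau>T u) (at u)) \<and>
      (\<forall>u\<in>sT ` I. \<kappa>\<beta> u = - \<kappa>T u * sin (\<phi> u) \<and> \<tau>\<beta> u = \<kappa>T u * cos (\<phi> u))"
    using curvature_torsion_\<beta> by (intro exI[of _ \<phi>]) auto
  moreover have "(\<lambda>v. \<tau>\<beta> v / \<kappa>\<beta> v) differentiable (at u)" if "u \<in> sT ` I" for u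
    using torsion_ratio_has_real_derivative[OF that] real_differentiable_def by blast
  ultimately show ?thesis
    using curvature_torsion_T by blast
qed

end
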